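(* Let $\langle (x_n,y_n)\rangle_{n\in\mathbb{N}}$ be the solutions in $\mathbb{N}^2$ of $x^2-19\,y^2=1$, indexed so that $y_0<y_1<\cdots$. Suppose $n>0$ is not a power of $2$ and $y_n/39$ is representable. Then the equation \[ 19\cdot 3^2\cdot (r^2+r\,s+5\,s^2)^2 - 13^2\cdot (v^2+v\,u+5\,u^2)^2 = 2 \] has an integer solution $\bar r,\bar s,\bar v,\bar u$ with $\bar r\neq\pm1$ or $\bar s\neq 0$, such that $39\,(\bar r^2+\bar r\bar s+5\bar s^2)(\bar v^2+\bar v\bar u+5\bar u^2)\mid y_n$.
   Context: $(x_0,y_0)=(1,0)$, $(x_1,y_1)=(170,39)$, $x_n+y_n\sqrt{19}=(170+39\sqrt{19})^n$. A non-negative integer $N$ is called representable if $N=w^2+w\,t+5\,t^2$ for some $w,t\in\mathbb{Z}$. *)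

theory Defs
  imports Main
begin

text \<open>Solutions of x^2 - 19 y^2 = 1: x_n + y_n sqrt 19 = (170 + 39 sqrt 19)^n,
  i.e. (x_0,y_0) = (1,0) and multiplication by 170 + 39 sqrt 19.\<close>
fun pell19 :: "nat \<Rightarrow> int \<times> int" where
  "pell19 0 = (1, 0)"
| "pell19 (Suc n) = (let (x, y) = pell19 n in (170 * x + 19 * 39 * y, 39 * x + 170 * y))"

definition xn :: "nat \<Rightarrow> int" where "xn n = fst (pell19 n)"
definition yn :: "nat \<Rightarrow> int" where "yn n = snd (pell19 n)"

definition representable :: "int \<Rightarrow> bool" where
  "representable N \<longleftrightarrow> N \<ge> 0 \<and> (\<exists>w t :: int. N = w^2 + w * t + 5 * t^2)"

end

theory Submission
  imports Defs "HOL-Computational_Algebra.Primes"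
begin

text \<open>Write n = 2^a d with d odd; since n is not a power of 2, d = 2k + 3. Factoring
  (170 + 39 \<surd>19)^d as a square shows y_d = 39 A B with 171 A^2 - 169 B^2 = 2, A > 1
  and A, B coprime, and the doubling formula y_{2m} = 2 x_m y_m gives y_n = y_d M with M
  coprime to A B. So y_n / 39 = A B M with pairwise coprime factors. The form
  w^2 + w t + 5 t^2 is the only reduced form of discriminant -19, so every positive divisor
  of a primitively represented number is represented, and hence so is every factor of a
  represented number that is coprime to its cofactor. Thus A and B are represented, and
  19 \<cdot> 3^2 A^2 - 13^2 B^2 = 2 is the required equation.\<close>

lemma principal_form_nonneg: "0 \<le> w^2 + w * t + 5 * t^2" for w t :: int
proof -
  have "4 * (w^2 + w * t + 5 * t^2) = (2 * w + t)^2 + 19 * t^2"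
    by (simp add: algebra_simps power2_eq_square)
  then show ?thesis by (smt (verit) zero_le_power2)
qed

lemma representable_iff: "representable N \<longleftrightarrow> (\<exists>w t. N = w^2 + w * t + 5 * t^2)"
  unfolding representable_def using principal_form_nonneg by blast

lemma representable_mult:
  assumes "representable a" "representable b"
  shows "representable (a * b)"
proof -
  obtain w1 t1 w2 t2 where "a = w1^2 + w1 * t1 + 5 * t1^2" "b = w2^2 + w2 * t2 + 5 * t2^2"
    using assms unfolding representable_iff by blast
  then have "a * b = (w1 * w2 - 5 * t1 * t2)^2 + (w1 * w2 - 5 * t1 * t2) * (w1 * t2 + t1 * w2 + t1 * t2)
      + 5 * (w1 * t2 + t1 * w2 + t1 * t2)^2"
    by (simp add: algebra_simps power2_eq_square)
  then show ?thesis unfolding representable_iff by blast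
qed

lemma representable_square_mult:
  assumes "representable a"
  shows "representable (p^2 * a)"
proof -
  have "representable (p^2)" unfolding representable_iff by (rule exI[of _ p], rule exI[of _ 0]) simp
  with assms show ?thesis by (simp add: representable_mult)
qed

lemma reduced_form_disc19:
  fixes a b c :: int
  assumes "\<bar>b\<bar> \<le> a" "a \<le> c" "4 * a * c - b^2 = 19"
  shows "a = 1 \<and> b^2 = 1 \<and> c = 5"
proof -
  have "b^2 \<le> a^2" using assms(1) abs_le_square_iff[of b a] by auto
  moreover have "a^2 \<le> a * c"
    using assms(1,2) mult_left_mono[of a c a] by (simp add: power2_eq_square)
  ultimately have "3 * a^2 \<le> 19" using assms(3) by linarith
  then have "a < 3" using power_mono[of 3 a 2] by fastforce
  then have "b \<in> {-2, -1, 0, 1, 2}" using assms(1) by auto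
  then have "b^2 \<in> {0, 1, 4}" by auto
  moreover have "a \<in> {0, 1, 2}" using assms(1) \<open>a < 3\<close> by auto
  moreover have "4 * a * c = 19 + b^2" using assms(3) by simp
  ultimately show ?thesis by (elim insertE emptyE; presburger)
qed

lemma middle_coefficient_reduction:
  fixes a b :: int
  assumes "0 < a"
  shows "\<exists>k. \<bar>b + 2 * a * k\<bar> \<le> a"
proof
  have "b + 2 * a * (- ((b + a) div (2 * a))) = (b + a) mod (2 * a) - a"
    by (simp add: algebra_simps minus_div_mult_eq_mod[symmetric])
  then show "\<bar>b + 2 * a * (- ((b + a) div (2 * a)))\<bar> \<le> a"
    using pos_mod_bound[of "2 * a" "b + a"] pos_mod_sign[of "2 * a" "b + a"] assms by linarith
qed

lemma form_disc19_representable: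
  fixes a b c x y :: int
  assumes "4 * a * c - b^2 = 19" "0 < a"
  shows "representable (a * x^2 + b * x * y + c * y^2)"
  using assms
proof (induction "nat a" arbitrary: a b c x y rule: less_induct)
  case less
  obtain k where k: "\<bar>b + 2 * a * k\<bar> \<le> a"
    using middle_coefficient_reduction less.prems(2) by blast
  define b' c' X where "b' = b + 2 * a * k" and "c' = a * k^2 + b * k + c" and "X = x - k * y"
  have disc: "4 * a * c' - b'^2 = 19"
    using less.prems(1) unfolding b'_def c'_def by (simp add: algebra_simps power2_eq_square)
  have substitution: "a * x^2 + b * x * y + c * y^2 = a * X^2 + b' * X * y + c' * y^2"
    unfolding b'_def c'_def X_def by (simp add: algebra_simps power2_eq_square)
  show ?case
  proof (cases "a \<le> c'")
    case True
    then have "a = 1" "b'^2 = 1" "c' = 5"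
      using reduced_form_disc19 k disc unfolding b'_def by blast+
    then have "a * X^2 + b' * X * y + c' * y^2 = X^2 + X * (b' * y) + 5 * (b' * y)^2"
      by (simp add: algebra_simps power2_eq_square)
    then show ?thesis unfolding substitution representable_iff by blast
  next
    case False
    have "0 < 4 * a * c'" using disc by (smt (verit) zero_le_power2)
    then have "0 < c'" using less.prems(2) by (simp add: zero_less_mult_iff)
    with False disc have "representable (c' * y^2 + b' * y * X + a * X^2)"
      by (intro less.hyps) (auto simp: algebra_simps)
    then show ?thesis unfolding substitution by (simp add: algebra_simps)
  qed
qed

text \<open>A unimodular substitution (w, t), (p, u) turns the principal form into a form
  N X^2 + B X Y + C Y^2 of the same discriminant with N = w^2 + w t + 5 t^2; if N = a m,
  then a X^2 + B X Y + m C Y^2 still has discriminant -19 and represents a.\<close>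
lemma representable_dvd_primitive_value:
  fixes a w t :: int
  assumes "coprime w t" "0 < a" "a dvd w^2 + w * t + 5 * t^2"
  shows "representable a"
proof -
  obtain u v where "u * w + v * t = gcd w t" using bezout_int by blast
  with assms(1) have unimodular: "w * u - t * (- v) = 1" by (simp add: algebra_simps)
  define p where "p = - v"
  obtain m where m: "w^2 + w * t + 5 * t^2 = a * m" using assms(3) by blast
  define B where "B = 2 * w * p + w * u + t * p + 10 * t * u"
  have "4 * (w^2 + w * t + 5 * t^2) * (p^2 + p * u + 5 * u^2) - B^2 = 19 * (w * u - t * p)^2"
    unfolding B_def by (simp add: algebra_simps power2_eq_square)
  then have "4 * a * (m * (p^2 + p * u + 5 * u^2)) - B^2 = 19 * (w * u - t * p)^2"
    unfolding m by (simp add: algebra_simps)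
  then have "4 * a * (m * (p^2 + p * u + 5 * u^2)) - B^2 = 19"
    using unimodular unfolding p_def by simp
  from form_disc19_representable[OF this assms(2), of 1 0] show ?thesis by simp
qed

lemma prime_square_mult_eq_coprime_mult:
  fixes p a b N :: int
  assumes "prime p" "coprime a b" "p^2 * N = a * b"
  shows "(\<exists>a'. a = p^2 * a' \<and> N = a' * b) \<or> (\<exists>b'. b = p^2 * b' \<and> N = a * b')"
proof -
  have p0: "p^2 \<noteq> 0" using assms(1) by simp
  have "p^2 dvd a * b" using assms(3) by (metis dvd_triv_left)
  moreover have "coprime (p^2) b \<or> coprime (p^2) a"
  proof (cases "p dvd a")
    case True
    then have "\<not> p dvd b"
      using assms(1,2) coprime_common_divisor not_prime_unit by blast
    then show ?thesis using assms(1) prime_imp_coprime by auto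
  next
    case False
    then show ?thesis using assms(1) prime_imp_coprime by auto
  qed
  ultimately have "p^2 dvd a \<or> p^2 dvd b"
    using coprime_dvd_mult_left_iff coprime_dvd_mult_right_iff by blast
  then show ?thesis
  proof
    assume "p^2 dvd a"
    then obtain a' where "a = p^2 * a'" by blast
    with assms(3) p0 show ?thesis by (auto simp: mult.assoc)
  next
    assume "p^2 dvd b"
    then obtain b' where "b = p^2 * b'" by blast
    with assms(3) p0 show ?thesis by (auto simp: mult.left_commute)
  qed
qed

lemma representable_coprime_factor:
  fixes a b :: int
  assumes "representable (a * b)" "0 < a" "0 < b" "coprime a b"
  shows "representable a"
  using assms
proof (induction "nat (a * b)" arbitrary: a b rule: less_induct)
  case less
  obtain w t where wt: "a * b = w^2 + w * t + 5 * t^2"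
    using less.prems(1) unfolding representable_iff by blast
  show ?case
  proof (cases "coprime w t")
    case True
    then show ?thesis
      using representable_dvd_primitive_value less.prems(2) wt by (metis dvd_triv_left)
  next
    case False
    then have "\<bar>gcd w t\<bar> \<noteq> 1" by (simp add: coprime_iff_gcd_eq_1)
    then obtain p where p: "prime p" "p dvd gcd w t" by (rule prime_factor_int)
    then obtain w' t' where "w = p * w'" "t = p * t'" by (meson dvd_gcdD1 dvd_gcdD2 dvdE)
    define N where "N = w'^2 + w' * t' + 5 * t'^2"
    have ab: "a * b = p^2 * N"
      unfolding wt N_def \<open>w = p * w'\<close> \<open>t = p * t'\<close> by (simp add: algebra_simps power2_eq_square)
    have "1 < p^2" using prime_gt_1_int[OF p(1)] by (simp add: one_less_power)
    moreover have "0 < a * b" using less.prems(2,3) by simp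
    ultimately have "0 < N" "N < a * b" unfolding ab by (auto simp: zero_less_mult_iff)
    then have smaller: "nat N < nat (a * b)" by simp
    have "representable N" unfolding N_def representable_iff by blast
    from prime_square_mult_eq_coprime_mult[OF p(1) less.prems(4) ab[symmetric]] show ?thesis
    proof (elim disjE exE conjE)
      fix a' assume a': "a = p^2 * a'" "N = a' * b"
      then have "0 < a'" "coprime a' b" using less.prems(2,4) \<open>1 < p^2\<close>
        by (auto simp: zero_less_mult_iff)
      then have "representable a'"
        using less.hyps smaller a'(2) \<open>representable N\<close> less.prems(3) by blast
      then show ?thesis unfolding a'(1) by (rule representable_square_mult)
    next
      fix b' assume b': "b = p^2 * b'" "N = a * b'"
      then have "0 < b'" "coprime a b'" using less.prems(3,4) \<open>1 < p^2\<close>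
        by (auto simp: zero_less_mult_iff)
      then show ?thesis
        using less.hyps smaller b'(2) \<open>representable N\<close> less.prems(2) by blast
    qed
  qed
qed

lemma xn_0 [simp]: "xn 0 = 1" and yn_0 [simp]: "yn 0 = 0"
  by (simp_all add: xn_def yn_def)

lemma xn_Suc: "xn (Suc n) = 170 * xn n + 741 * yn n"
  and yn_Suc: "yn (Suc n) = 39 * xn n + 170 * yn n"
  by (simp_all add: xn_def yn_def case_prod_beta Let_def)

lemma xn_add: "xn (m + n) = xn m * xn n + 19 * yn m * yn n"
  and yn_add: "yn (m + n) = xn m * yn n + yn m * xn n"
  by (induction n) (simp_all add: xn_Suc yn_Suc algebra_simps)

lemma yn_double: "yn (2 * m) = 2 * xn m * yn m"
proof -
  have "yn (m + m) = 2 * xn m * yn m" using yn_add[of m m] by simp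
  then show ?thesis by (metis mult_2)
qed

lemma pell_equation: "xn n^2 - 19 * yn n^2 = 1"
  by (induction n) (simp_all add: xn_Suc yn_Suc algebra_simps power2_eq_square)

lemma coprime_xn_yn: "coprime (xn n) (yn n)"
proof (rule coprimeI)
  fix c assume "c dvd xn n" "c dvd yn n"
  then have "c dvd xn n^2 - 19 * yn n^2" by (simp add: power2_eq_square)
  then show "is_unit c" by (simp add: pell_equation)
qed

lemma xn_pos: "0 < xn n" and yn_nonneg: "0 \<le> yn n"
  by (induction n) (simp_all add: xn_Suc yn_Suc add_pos_nonneg)

lemma yn_pos: "0 < n \<Longrightarrow> 0 < yn n"
  using xn_pos[of "n - 1"] yn_nonneg[of "n - 1"] yn_Suc[of "n - 1"] by simp

lemma yn_two_pow_mult: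
  assumes "odd C" "C dvd yn d"
  shows "\<exists>M. yn (2^a * d) = yn d * M \<and> coprime C M"
proof (induction a)
  case 0
  show ?case by (intro exI[of _ 1]) simp
next
  case (Suc a)
  then obtain M where M: "yn (2^a * d) = yn d * M" "coprime C M" by blast
  define m where "m = 2^a * d"
  have "C dvd yn m" using M(1) assms(2) unfolding m_def by simp
  then have "coprime C (xn m)"
    using coprime_xn_yn[of m] by (meson coprime_commute coprime_imp_coprime dvd_trans)
  with M(2) assms(1) have "coprime C (2 * xn m * M)" by simp
  moreover have "yn (2^Suc a * d) = yn d * (2 * xn m * M)"
    using yn_double[of m] M(1) unfolding m_def by (simp add: algebra_simps)
  ultimately show ?case by blast
qed

text \<open>The pair (A_k, B_k) is defined by A_k \<surd>171 + 13 B_k = (\<surd>171 + 13)(170 + 39 \<surd>19)^k;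
  squaring gives (A_k \<surd>171 + 13 B_k)^2 = 2 (x_{2k+1} + y_{2k+1} \<surd>19).\<close>
fun odd_index_factors :: "nat \<Rightarrow> int \<times> int" where
  "odd_index_factors 0 = (1, 1)"
| "odd_index_factors (Suc k) =
    (let (A, B) = odd_index_factors k in (170 * A + 169 * B, 171 * A + 170 * B))"

lemma odd_index_factors_invariant:
  assumes "odd_index_factors k = (A, B)"
  shows "171 * A^2 - 169 * B^2 = 2 \<and> odd A \<and> odd B \<and> 1 \<le> A \<and> 1 \<le> B"
  using assms
proof (induction k arbitrary: A B)
  case (Suc k)
  then show ?case
    by (cases "odd_index_factors k") (auto simp: Let_def algebra_simps power2_eq_square)
qed simp

lemma odd_index_factors_Suc_gt_1:
  assumes "odd_index_factors (Suc k) = (A, B)"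
  shows "1 < A"
  using assms odd_index_factors_invariant[of k]
  by (cases "odd_index_factors k") (auto simp: Let_def)

lemma coprime_odd_index_factors:
  assumes "odd_index_factors k = (A, B)"
  shows "coprime A B"
proof (rule coprimeI)
  fix c assume c: "c dvd A" "c dvd B"
  have props: "171 * A^2 - 169 * B^2 = 2" "odd A"
    using odd_index_factors_invariant[OF assms] by auto
  have "c dvd 171 * A^2 - 169 * B^2" using c by (simp add: power2_eq_square)
  then have "c dvd 2" using props(1) by simp
  then have "c dvd A - 2 * (A div 2)" using c(1) by simp
  also have "A - 2 * (A div 2) = 1" using props(2) by presburger
  finally show "is_unit c" by simp
qed

lemma pell_odd_index:
  assumes "odd_index_factors k = (A, B)"
  shows "2 * xn (2 * k + 1) = 171 * A^2 + 169 * B^2 \<and> yn (2 * k + 1) = 39 * A * B"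
  using assms
proof (induction k arbitrary: A B)
  case 0
  then show ?case by (simp add: xn_Suc yn_Suc)
next
  case (Suc k)
  obtain A' B' where AB': "odd_index_factors k = (A', B')" by fastforce
  then have AB: "A = 170 * A' + 169 * B'" "B = 171 * A' + 170 * B'" using Suc.prems by simp_all
  define j where "j = 2 * k + 1"
  have "2 * Suc k + 1 = Suc (Suc j)" unfolding j_def by simp
  moreover have "2 * xn (Suc (Suc j)) = 57799 * (2 * xn j) + 503880 * yn j"
    and "yn (Suc (Suc j)) = 6630 * (2 * xn j) + 57799 * yn j"
    by (simp_all add: xn_Suc yn_Suc)
  ultimately show ?case
    using Suc.IH[OF AB'] unfolding AB j_def[symmetric]
    by (simp add: algebra_simps power2_eq_square)
qed

theorem corollary5:
  fixes n :: nat
  assumes "n > 0"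
    and "\<not> (\<exists>k::nat. n = 2 ^ k)"
    and "39 dvd yn n" and "representable (yn n div 39)"
  shows "\<exists>r s v u :: int.
           19 * 3^2 * (r^2 + r * s + 5 * s^2)^2 - 13^2 * (v^2 + v * u + 5 * u^2)^2 = 2
         \<and> (r \<noteq> 1 \<and> r \<noteq> -1 \<or> s \<noteq> 0)
         \<and> 39 * (r^2 + r * s + 5 * s^2) * (v^2 + v * u + 5 * u^2) dvd yn n"
proof -
  obtain d where d: "n = 2 ^ multiplicity 2 n * d" "\<not> 2 dvd d"
    using multiplicity_decompose'[of n 2] assms(1) by auto
  with assms(2) obtain k where k: "d = 2 * Suc k + 1"
    by (metis One_nat_def oddE add.commute add_0 mult_0_right mult_1_right not0_implies_Suc)
  obtain A B where AB: "odd_index_factors (Suc k) = (A, B)" by fastforce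
  note props = odd_index_factors_invariant[OF AB]
  have yd: "yn d = 39 * (A * B)" using pell_odd_index[OF AB] k by simp
  obtain M where M: "yn n = yn d * M" "coprime (A * B) M"
    using yn_two_pow_mult[of "A * B" d "multiplicity 2 n"] props yd d(1) by auto
  have "0 < A * B" "0 < yn n" using props yn_pos assms(1) by auto
  then have "0 < M" using M(1) yd zero_less_mult_pos[of "39 * (A * B)" M] by simp
  have "representable (A * (B * M))" and "representable (B * (A * M))"
    using assms(4) M(1) yd by (simp_all add: mult_ac)
  moreover have "coprime A (B * M)" and "coprime B (A * M)"
    using M(2) coprime_odd_index_factors[OF AB] by (auto simp: coprime_commute)
  ultimately have "representable A" "representable B"
    using representable_coprime_factor props \<open>0 < M\<close> by auto
  then obtain r s v u where rs: "A = r^2 + r * s + 5 * s^2" and vu: "B = v^2 + v * u + 5 * u^2"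
    unfolding representable_iff by blast
  have "r \<noteq> 1 \<and> r \<noteq> -1 \<or> s \<noteq> 0"
    using odd_index_factors_Suc_gt_1[OF AB] rs by auto
  moreover have "39 * A * B dvd yn n" using M(1) yd by simp
  ultimately show ?thesis using props unfolding rs vu by auto
qed

end
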